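(* Let $R$ be a finite set of $n$ robots, with coordination space $\chi=\mathbb{R}^n$, obstacle region, dynamics, brake-safe set $B_G$ and control law $g^G$ as described in the context, where $G$ is any directed graph on vertex set $R$. Let $s\in B_G$ and let $\mathbf u\in\mathbf U$ be a control satisfying, componentwise, $$\forall k\in\mathbb{N},\quad \mathbf u(k)\le g^G(\Phi(k,s,\mathbf u)).$$ Then $\Phi(k,s,\mathbf u)\in B_G$ for all $k\in\mathbb{N}$, and $\pi_x(\Phi(t,s,\mathbf u))\in\chi^{\mathrm{free}}_G$ for all $t\ge0$.
   Context: Robots $i\in R$ move along fixed paths; $x_i\in\mathbb{R}$ is the curvilinear coordinate of robot $i$, $x=(x_i)_{i\in R}\in\chi:=\mathbb{R}^n$, and $\{\mathbf e_i\}$ is the canonical basis of $\chi$. For each unordered pair $\{i,j\}$, $\chi^{\mathrm{obs}}_{ij}\subset\chi$ (configurations where $i$ and $j$ collide) is an open cylinder of the form $C_{ij}+\mathrm{span}\{\mathbf e_k:k\ne i,j\}$ where $C_{ij}$ is an open bounded convex subset of $\mathrm{span}\{\mathbf e_i,\mathbf e_j\}$ (possibly empty); $\chi^{\mathrm{obs}}=\bigcup_{\{i,j\}}\chi^{\mathrm{obs}}_{ij}$. For $i\neq j$ define $\chi^{\mathrm{obs}}_{i\succ j}:=\chi^{\mathrm{obs}}_{ij}-\mathbb{R}_+\mathbf e_i+\mathbb{R}_+\mathbf e_j$ (Minkowski sum). A priority graph is a directed graph $G$ with vertex set $R$ and edge set $E(G)$; an edge $(i,j)$ means $i$ has priority over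 $j$. Set $\chi^{\mathrm{obs}}_G:=\bigcup_{(i,j)\in E(G)}\chi^{\mathrm{obs}}_{i\succ j}$, $\chi^{\mathrm{free}}_G:=\chi\setminus\chi^{\mathrm{obs}}_G$. Dynamics: robot $i$ has state $s_i=(x_i,v_i)\in S_i:=\mathbb{R}\times[0,\overline v_i]$ with speed limit $\overline v_i\ge 0$, and $\dot x_i=v_i$, $\dot v_i=\mathbf u_i(t)\,\delta(\mathbf u_i(t),v_i(t))$, where $\delta(u,v)=0$ if ($v=0$ and $u<0$) or ($v=\overline v_i$ and $u>0$), and $\delta=1$ otherwise. Controls take values in $U_i=[\underline u_i,\overline u_i]$ with $\underline u_i<0<\overline u_i$ and are piecewise constant on each slot $[k,k+1)$, $k\in\mathbb{N}$; $\mathbf U_i$ is the set of such controls, $\mathbf U=\prod_i\mathbf U_i$, $S=\prod_i S_i$, $U=\prod_i U_i$. $\Phi_i(t,s_i,\mathbf u_i)$ is the resulting flow of robot $i$ from $s_i$, and $\Phi(t,s,\mathbf u)=(\Phi_i(t,s_i,\mathbf u_i))_i$. $\underline{\mathbf u}$ denotes the constant control equal to $(\underline u_i)_i$. $\pi_x(s)=x$. Brake-safe states: $B_G:=\{s\in S:\ \pi_x(\Phi(t,s,\underline{\mathbf u}))\in\chi^{\mathrm{free}}_G\ \forall t\ge0\}$. Impulse control: $\mathbf u_i^{\mathrm{impulse}}(t)=\overline u_i$ for $t\in[0,1)$ and $=\underline u_i$ for $t\ge1$. Worst-case control w.r.t. $i$: $\tilde{\mathbf u}^i$ with $\tilde{\mathbf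 u}^i_i=\mathbf u_i^{\mathrm{impulse}}$ and $\tilde{\mathbf u}^i_j$ the constant control $\underline u_j$ for $j\ne i$. Control law $g^G:S\to U$: $g^G_i(s)=\underline u_i$ if there exists $(j,i)\in E(G)$ and $t\ge0$ with $\pi_x(\Phi(t,s,\tilde{\mathbf u}^i))\in\chi^{\mathrm{obs}}_{j\succ i}$; otherwise $g^G_i(s)=\overline u_i$. *)

theory Defs
  imports "HOL-Analysis.Analysis"
begin

text \<open>Robots are indexed by a finite type 'r; configurations x :: 'r \<Rightarrow> real
  (the coordination space chi = R^n); states s :: 'r \<Rightarrow> real \<times> real with
  s i = (x_i, v_i).  Controls are piecewise constant on slots [k,k+1), so a control
  of robot i is represented by its sequence of slot values  nat \<Rightarrow> real.\<close>

definition unit_vec :: "'r \<Rightarrow> ('r \<Rightarrow> real)" where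
  "unit_vec i = (\<lambda>k. if k = i then 1 else 0)"

text \<open>C i j \<subseteq> R^2 describes the collision set of the pair i,j in coordinates
  (x_i, x_j); the cylinder chi^obs_ij.  Only distinct pairs collide.\<close>
definition obs_pair :: "('r \<Rightarrow> 'r \<Rightarrow> (real \<times> real) set) \<Rightarrow> 'r \<Rightarrow> 'r \<Rightarrow> ('r \<Rightarrow> real) set" where
  "obs_pair C i j = {x. i \<noteq> j \<and> (x i, x j) \<in> C i j}"

definition obs_prio :: "('r \<Rightarrow> 'r \<Rightarrow> (real \<times> real) set) \<Rightarrow> 'r \<Rightarrow> 'r \<Rightarrow> ('r \<Rightarrow> real) set" where
  "obs_prio C i j = {y. \<exists>x\<in>obs_pair C i j. \<exists>a\<ge>0. \<exists>b\<ge>0.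
       y = (\<lambda>k. x k - a * unit_vec i k + b * unit_vec j k)}"

definition obs_G :: "('r \<Rightarrow> 'r \<Rightarrow> (real \<times> real) set) \<Rightarrow> ('r \<times> 'r) set \<Rightarrow> ('r \<Rightarrow> real) set" where
  "obs_G C E = (\<Union>(i,j)\<in>E. obs_prio C i j)"

definition free_G :: "('r \<Rightarrow> 'r \<Rightarrow> (real \<times> real) set) \<Rightarrow> ('r \<times> 'r) set \<Rightarrow> ('r \<Rightarrow> real) set" where
  "free_G C E = UNIV - obs_G C E"

definition vel_slot :: "real \<Rightarrow> real \<Rightarrow> real \<Rightarrow> real \<Rightarrow> real" where
  "vel_slot vbar u v0 \<tau> = max 0 (min vbar (v0 + u * \<tau>))"

definition slot_flow :: "real \<Rightarrow> real \<Rightarrow> real \<times> real \<Rightarrow> real \<Rightarrow> real \<times> real" where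
  "slot_flow vbar u s0 \<tau> =
     (fst s0 + integral {0..\<tau>} (\<lambda>\<sigma>. vel_slot vbar u (snd s0) \<sigma>), vel_slot vbar u (snd s0) \<tau>)"

fun flow_nat :: "real \<Rightarrow> (nat \<Rightarrow> real) \<Rightarrow> real \<times> real \<Rightarrow> nat \<Rightarrow> real \<times> real" where
  "flow_nat vbar u s0 0 = s0"
| "flow_nat vbar u s0 (Suc k) = slot_flow vbar (u k) (flow_nat vbar u s0 k) 1"

definition flow1 :: "real \<Rightarrow> real \<Rightarrow> real \<times> real \<Rightarrow> (nat \<Rightarrow> real) \<Rightarrow> real \<times> real" where
  "flow1 vbar t s0 u =
     slot_flow vbar (u (nat \<lfloor>t\<rfloor>)) (flow_nat vbar u s0 (nat \<lfloor>t\<rfloor>)) (t - of_int \<lfloor>t\<rfloor>)"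

definition flow :: "('r \<Rightarrow> real) \<Rightarrow> real \<Rightarrow> ('r \<Rightarrow> real \<times> real) \<Rightarrow> ('r \<Rightarrow> nat \<Rightarrow> real) \<Rightarrow> ('r \<Rightarrow> real \<times> real)" where
  "flow vbar t s u = (\<lambda>i. flow1 (vbar i) t (s i) (u i))"

definition pi_x :: "('r \<Rightarrow> real \<times> real) \<Rightarrow> ('r \<Rightarrow> real)" where
  "pi_x s = (\<lambda>i. fst (s i))"

definition states :: "('r \<Rightarrow> real) \<Rightarrow> ('r \<Rightarrow> real \<times> real) set" where
  "states vbar = {s. \<forall>i. 0 \<le> snd (s i) \<and> snd (s i) \<le> vbar i}"

definition controls :: "('r \<Rightarrow> real) \<Rightarrow> ('r \<Rightarrow> real) \<Rightarrow> ('r \<Rightarrow> nat \<Rightarrow> real) set" where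
  "controls ulo uhi = {u. \<forall>i k. ulo i \<le> u i k \<and> u i k \<le> uhi i}"

definition brake_ctrl :: "('r \<Rightarrow> real) \<Rightarrow> ('r \<Rightarrow> nat \<Rightarrow> real)" where
  "brake_ctrl ulo = (\<lambda>i k. ulo i)"

definition impulse :: "real \<Rightarrow> real \<Rightarrow> nat \<Rightarrow> real" where
  "impulse ulo_i uhi_i = (\<lambda>k. if k = 0 then uhi_i else ulo_i)"

definition worst_ctrl :: "('r \<Rightarrow> real) \<Rightarrow> ('r \<Rightarrow> real) \<Rightarrow> 'r \<Rightarrow> ('r \<Rightarrow> nat \<Rightarrow> real)" where
  "worst_ctrl ulo uhi i = (\<lambda>j. if j = i then impulse (ulo i) (uhi i) else (\<lambda>k. ulo j))"

definition brake_safe :: "('r \<Rightarrow> real) \<Rightarrow> ('r \<Rightarrow> real) \<Rightarrow> ('r \<Rightarrow> 'r \<Rightarrow> (real \<times> real) set)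
    \<Rightarrow> ('r \<times> 'r) set \<Rightarrow> ('r \<Rightarrow> real \<times> real) set" where
  "brake_safe vbar ulo C E =
     {s \<in> states vbar. \<forall>t\<ge>0. pi_x (flow vbar t s (brake_ctrl ulo)) \<in> free_G C E}"

definition ctrl_law :: "('r \<Rightarrow> real) \<Rightarrow> ('r \<Rightarrow> real) \<Rightarrow> ('r \<Rightarrow> real) \<Rightarrow> ('r \<Rightarrow> 'r \<Rightarrow> (real \<times> real) set)
    \<Rightarrow> ('r \<times> 'r) set \<Rightarrow> ('r \<Rightarrow> real \<times> real) \<Rightarrow> ('r \<Rightarrow> real)" where
  "ctrl_law vbar ulo uhi C E s = (\<lambda>i.
     if \<exists>j. (j, i) \<in> E \<and> (\<exists>t\<ge>0. pi_x (flow vbar t s (worst_ctrl ulo uhi i)) \<in> obs_prio C j i)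
     then ulo i else uhi i)"

end

theory Submission
  imports Defs
begin

text \<open>Trajectories are monotone in the controls, and the region \<open>obs_prio C j i\<close> is
  closed under moving robot \<open>j\<close> back and robot \<open>i\<close> forward. Apply \<open>u(k)\<close> for one slot
  and brake afterwards. A robot \<open>i\<close> told to brake moves exactly as under pure braking,
  while every other robot is ahead of its braking position; a robot allowed to accelerate
  stays behind its worst-case trajectory, while every other robot is again ahead of braking.
  Either way a collision with a higher-priority robot would transfer to a trajectory known
  to be free. This yields freeness within each slot and, by induction over the slots,
  brake-safety of every sampled state.\<close>

lemma vel_slot_range:
  assumes "0 \<le> vbar" shows "0 \<le> vel_slot vbar u v t \<and> vel_slot vbar u v t \<le> vbar"
  using assms unfolding vel_slot_def by auto

lemma vel_slot_mono:
  assumes "u1 \<le> u2" "v1 \<le> v2" "0 \<le> t"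
  shows "vel_slot vbar u1 v1 t \<le> vel_slot vbar u2 v2 t"
proof -
  have "v1 + u1 * t \<le> v2 + u2 * t" using assms by (simp add: add_mono mult_right_mono)
  then show ?thesis unfolding vel_slot_def by (intro max.mono min.mono) auto
qed

lemma continuous_on_vel_slot: "continuous_on S (vel_slot vbar u v)"
  unfolding vel_slot_def by (intro continuous_intros)

lemma slot_flow_mono:
  assumes "u1 \<le> u2" "fst a \<le> fst b" "snd a \<le> snd b" "0 \<le> \<tau>"
  shows "fst (slot_flow vbar u1 a \<tau>) \<le> fst (slot_flow vbar u2 b \<tau>)
       \<and> snd (slot_flow vbar u1 a \<tau>) \<le> snd (slot_flow vbar u2 b \<tau>)"
proof -
  have "integral {0..\<tau>} (vel_slot vbar u1 (snd a)) \<le> integral {0..\<tau>} (vel_slot vbar u2 (snd b))"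
    by (rule integral_le)
      (auto intro!: integrable_continuous_real continuous_on_vel_slot vel_slot_mono assms)
  then show ?thesis using assms unfolding slot_flow_def by (auto intro!: vel_slot_mono)
qed

lemma flow_nat_mono:
  assumes "\<And>m. c1 m \<le> c2 m" "fst a \<le> fst b" "snd a \<le> snd b"
  shows "fst (flow_nat vbar c1 a n) \<le> fst (flow_nat vbar c2 b n)
       \<and> snd (flow_nat vbar c1 a n) \<le> snd (flow_nat vbar c2 b n)"
proof (induction n)
  case 0
  then show ?case using assms by simp
next
  case (Suc n)
  then show ?case using slot_flow_mono[OF assms(1)[of n], of _ _ 1 vbar] by simp
qed

lemma flow1_mono:
  assumes "\<And>m. c1 m \<le> c2 m" "0 \<le> t"
  shows "fst (flow1 vbar t a c1) \<le> fst (flow1 vbar t a c2)"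
  unfolding flow1_def
  using flow_nat_mono[OF assms(1), where a=a and b=a and vbar=vbar and n="nat \<lfloor>t\<rfloor>"]
  by (intro slot_flow_mono[THEN conjunct1]) (auto intro: assms)

lemma flow_nat_vel_range:
  assumes "0 \<le> vbar" "0 \<le> snd s0" "snd s0 \<le> vbar"
  shows "0 \<le> snd (flow_nat vbar c s0 k) \<and> snd (flow_nat vbar c s0 k) \<le> vbar"
  using assms by (cases k) (simp_all add: slot_flow_def vel_slot_range)

lemma flow1_of_nat:
  assumes "0 \<le> snd (flow_nat vbar c s0 k)" "snd (flow_nat vbar c s0 k) \<le> vbar"
  shows "flow1 vbar (real k) s0 c = flow_nat vbar c s0 k"
  using assms unfolding flow1_def slot_flow_def vel_slot_def by (simp add: prod_eq_iff)

lemma flow1_first_slot: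
  assumes "0 \<le> \<tau>" "\<tau> < 1"
  shows "flow1 vbar \<tau> s0 c = slot_flow vbar (c 0) s0 \<tau>"
proof -
  have "\<lfloor>\<tau>\<rfloor> = 0" using assms by (simp add: floor_eq_iff)
  then show ?thesis unfolding flow1_def by simp
qed

lemma flow_nat_Suc_shift:
  "flow_nat vbar c s0 (Suc n) = flow_nat vbar (\<lambda>m. c (Suc m)) (slot_flow vbar (c 0) s0 1) n"
  by (induction n) auto

lemma flow1_shift:
  assumes "0 \<le> t"
  shows "flow1 vbar (1 + t) s0 c = flow1 vbar t (slot_flow vbar (c 0) s0 1) (\<lambda>m. c (Suc m))"
proof -
  have floor: "\<lfloor>1 + t\<rfloor> = 1 + \<lfloor>t\<rfloor>"
    by (metis add.commute floor_add_int of_int_1 floor_of_int add.right_neutral)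
  then have "nat \<lfloor>1 + t\<rfloor> = Suc (nat \<lfloor>t\<rfloor>)" using assms by (simp add: Suc_nat_eq_nat_zadd1)
  then show ?thesis
    unfolding flow1_def using floor by (simp del: flow_nat.simps(2) add: flow_nat_Suc_shift)
qed

lemma pi_x_flow: "pi_x (flow vbar t s c) i = fst (flow1 (vbar i) t (s i) (c i))"
  unfolding pi_x_def flow_def by simp

lemma obs_prio_mono:
  assumes "y \<in> obs_prio C j i" "y' j \<le> y j" "y i \<le> y' i"
  shows "y' \<in> obs_prio C j i"
proof -
  from assms(1) obtain x a b where x: "x \<in> obs_pair C j i" "a \<ge> 0" "b \<ge> 0"
    and y: "y = (\<lambda>k. x k - a * unit_vec j k + b * unit_vec i k)"
    unfolding obs_prio_def by blast
  have ji: "j \<noteq> i" using x(1) unfolding obs_pair_def by auto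
  define x' where "x' = (\<lambda>k. if k = j then x j else if k = i then x i else y' k)"
  have "x' \<in> obs_pair C j i" using x(1) ji unfolding obs_pair_def x'_def by auto
  moreover have "y j = x j - a" "y i = x i + b" using y ji by (auto simp: unit_vec_def)
  then have "y' = (\<lambda>k. x' k - (a + (y j - y' j)) * unit_vec j k + (b + (y' i - y i)) * unit_vec i k)"
    using ji by (auto simp: x'_def unit_vec_def)
  moreover have "a + (y j - y' j) \<ge> 0" "b + (y' i - y i) \<ge> 0" using assms x by auto
  ultimately show ?thesis unfolding obs_prio_def by blast
qed

definition then_brake :: "('r \<Rightarrow> real) \<Rightarrow> ('r \<Rightarrow> real) \<Rightarrow> ('r \<Rightarrow> nat \<Rightarrow> real)" where
  "then_brake v ulo = (\<lambda>i m. if m = 0 then v i else ulo i)"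

lemma then_brake_free:
  assumes safe: "S \<in> brake_safe vbar ulo C E"
    and v_lo: "\<And>i. ulo i \<le> v i"
    and v_le: "\<And>i. v i \<le> ctrl_law vbar ulo uhi C E S i"
    and t: "0 \<le> t"
  shows "pi_x (flow vbar t S (then_brake v ulo)) \<in> free_G C E"
proof (rule ccontr)
  let ?z = "pi_x (flow vbar t S (then_brake v ulo))"
  let ?b = "pi_x (flow vbar t S (brake_ctrl ulo))"
  assume "?z \<notin> free_G C E"
  then obtain j i where ji: "(j, i) \<in> E" and z: "?z \<in> obs_prio C j i"
    unfolding free_G_def obs_G_def by auto
  have "j \<noteq> i" using z unfolding obs_prio_def obs_pair_def by auto
  have b_free: "?b \<in> free_G C E" using safe t unfolding brake_safe_def by auto
  have b_behind_j: "?b j \<le> ?z j"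
    unfolding pi_x_flow brake_ctrl_def by (rule flow1_mono) (use v_lo t in \<open>auto simp: then_brake_def\<close>)
  show False
  proof (cases "\<exists>j. (j, i) \<in> E \<and> (\<exists>t\<ge>0. pi_x (flow vbar t S (worst_ctrl ulo uhi i)) \<in> obs_prio C j i)")
    case True
    then have "v i = ulo i" using v_le[of i] v_lo[of i] unfolding ctrl_law_def by simp
    then have "then_brake v ulo i = (\<lambda>_. ulo i)" unfolding then_brake_def by auto
    then have "?b i = ?z i" unfolding pi_x_flow brake_ctrl_def by simp
    then have "?b \<in> obs_prio C j i" using obs_prio_mono[OF z] b_behind_j by simp
    then show False using b_free ji unfolding free_G_def obs_G_def by auto
  next
    case False
    let ?w = "pi_x (flow vbar t S (worst_ctrl ulo uhi i))"
    have "v i \<le> uhi i" using v_le[of i] False unfolding ctrl_law_def by simp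
    have "?z i \<le> ?w i"
      unfolding pi_x_flow worst_ctrl_def if_P[OF refl]
      by (rule flow1_mono) (use \<open>v i \<le> uhi i\<close> t in \<open>auto simp: then_brake_def impulse_def\<close>)
    moreover have "?w j = ?b j"
      using \<open>j \<noteq> i\<close> by (simp add: pi_x_flow worst_ctrl_def brake_ctrl_def)
    ultimately have "?w \<in> obs_prio C j i" using obs_prio_mono[OF z, of ?w] b_behind_j by simp
    then show False using False ji t by auto
  qed
qed

lemma brake_safe_slot_flow:
  assumes vbar_nonneg: "\<And>i. 0 \<le> vbar i"
    and safe: "S \<in> brake_safe vbar ulo C E"
    and v_lo: "\<And>i. ulo i \<le> v i"
    and v_le: "\<And>i. v i \<le> ctrl_law vbar ulo uhi C E S i"
  shows "(\<lambda>i. slot_flow (vbar i) (v i) (S i) 1) \<in> brake_safe vbar ulo C E"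
proof -
  have "pi_x (flow vbar t (\<lambda>i. slot_flow (vbar i) (v i) (S i) 1) (brake_ctrl ulo))
      = pi_x (flow vbar (1 + t) S (then_brake v ulo))" if "0 \<le> t" for t
    using that by (intro ext) (simp add: pi_x_flow flow1_shift then_brake_def brake_ctrl_def)
  moreover have "(\<lambda>i. slot_flow (vbar i) (v i) (S i) 1) \<in> states vbar"
    using vbar_nonneg unfolding states_def slot_flow_def by (simp add: vel_slot_range)
  ultimately show ?thesis
    using then_brake_free[OF safe v_lo v_le] unfolding brake_safe_def by simp
qed

theorem theorem2:
  fixes vbar ulo uhi :: "'r::finite \<Rightarrow> real"
    and C :: "'r \<Rightarrow> 'r \<Rightarrow> (real \<times> real) set"
    and E :: "('r \<times> 'r) set"
    and s :: "'r \<Rightarrow> real \<times> real"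
    and u :: "'r \<Rightarrow> nat \<Rightarrow> real"
  assumes vbar_nonneg: "\<And>i. 0 \<le> vbar i"
    and ulo_neg: "\<And>i. ulo i < 0"
    and uhi_pos: "\<And>i. 0 < uhi i"
    and C_open: "\<And>i j. open (C i j)"
    and C_bounded: "\<And>i j. bounded (C i j)"
    and C_convex: "\<And>i j. convex (C i j)"
    and C_sym: "\<And>i j. C j i = prod.swap ` C i j"
    and s_safe: "s \<in> brake_safe vbar ulo C E"
    and u_ctrl: "u \<in> controls ulo uhi"
    and u_le: "\<And>k i. u i k \<le> ctrl_law vbar ulo uhi C E (flow vbar (real k) s u) i"
  shows "(\<forall>k::nat. flow vbar (real k) s u \<in> brake_safe vbar ulo C E)
       \<and> (\<forall>t\<ge>0. pi_x (flow vbar t s u) \<in> free_G C E)"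
proof -
  define S where "S k = (\<lambda>i. flow_nat (vbar i) (u i) (s i) k)" for k
  have u_lo: "ulo i \<le> u i k" for i k using u_ctrl unfolding controls_def by auto
  have "s \<in> states vbar" using s_safe unfolding brake_safe_def by auto
  then have flow_S: "flow vbar (real k) s u = S k" for k
    unfolding flow_def S_def states_def using vbar_nonneg
    by (intro ext flow1_of_nat flow_nat_vel_range[THEN conjunct1] flow_nat_vel_range[THEN conjunct2]) auto
  have S_safe: "S k \<in> brake_safe vbar ulo C E" for k
  proof (induction k)
    case 0
    then show ?case using s_safe by (simp add: S_def)
  next
    case (Suc k)
    then show ?case
      using brake_safe_slot_flow[OF vbar_nonneg Suc u_lo u_le[where k=k, unfolded flow_S]]
      by (simp add: S_def)
  qed
  have "pi_x (flow vbar t s u) \<in> free_G C E" if "0 \<le> t" for t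
  proof -
    define \<tau> where "\<tau> = t - of_int \<lfloor>t\<rfloor>"
    have \<tau>: "0 \<le> \<tau>" "\<tau> < 1" unfolding \<tau>_def by linarith+
    have "pi_x (flow vbar t s u) = pi_x (flow vbar \<tau> (S (nat \<lfloor>t\<rfloor>)) (then_brake (\<lambda>i. u i (nat \<lfloor>t\<rfloor>)) ulo))"
      using \<tau> by (intro ext) (simp add: pi_x_flow flow1_first_slot then_brake_def S_def flow1_def \<tau>_def)
    then show ?thesis
      using then_brake_free[OF S_safe u_lo u_le[unfolded flow_S] \<tau>(1)] by simp
  qed
  then show ?thesis using S_safe flow_S by simp
qed

end
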